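(* Let $\xi_1,\dots,\xi_n$ be independent real random variables with $\mathbf{E}\xi_i=0$, satisfying Bernstein's condition: there is a constant $\varepsilon>0$ such that $|\mathbf{E}\xi_i^k|\le \frac12 k!\,\varepsilon^{k-2}\mathbf{E}\xi_i^2$ for all $k\ge 3$ and $i=1,\dots,n$. Let $\sigma^2=\sum_{i=1}^n\mathbf{E}\xi_i^2$ and $T_n(\lambda)=\sum_{i=1}^n\frac{\mathbf{E}\xi_ie^{\lambda\xi_i}}{\mathbf{E}e^{\lambda\xi_i}}$. Then for all $0\le\lambda<\varepsilon^{-1}$, \[ (1-2.4\lambda\varepsilon)\lambda\sigma^2\le \frac{(1-1.5\lambda\varepsilon)(1-\lambda\varepsilon)}{1-\lambda\varepsilon+6\lambda^2\varepsilon^2}\lambda\sigma^2\le T_n(\lambda)\le\frac{1-0.5\lambda\varepsilon}{(1-\lambda\varepsilon)^2}\lambda\sigma^2 . \] *)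

theory Defs
  imports "HOL-Probability.Probability"
begin

definition T_n :: "'a measure \<Rightarrow> (nat \<Rightarrow> 'a \<Rightarrow> real) \<Rightarrow> nat \<Rightarrow> real \<Rightarrow> real" where
  "T_n M \<xi> n l = (\<Sum>i=1..n. (\<integral>x. \<xi> i x * exp (l * \<xi> i x) \<partial>M) / (\<integral>x. exp (l * \<xi> i x) \<partial>M))"

end

theory Submission
  imports Defs
begin

text \<open>
  \<open>T_n\<close> is a sum of tilted means \<open>E[X exp(\<lambda>X)] / E[exp(\<lambda>X)]\<close> of single centred variables, so it
  suffices to bound one of them. For \<open>\<lambda>\<epsilon> < 1\<close> both expectations are the sums of their moment
  series, and Bernstein's condition dominates these by geometric series in \<open>\<lambda>\<epsilon>\<close>: this gives
  \<open>E[X exp(\<lambda>X)] \<le> \<lambda>\<sigma>\<^sup>2/2 (1/(1-\<lambda>\<epsilon>)\<^sup>2 + 1/(1-\<lambda>\<epsilon>))\<close> and \<open>E[exp(\<lambda>X)] \<le> 1 + \<lambda>\<^sup>2\<sigma>\<^sup>2/(2(1-\<lambda>\<epsilon>))\<close>.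
  Conversely \<open>exp t \<ge> 1 + t\<close> gives \<open>E[exp(\<lambda>X)] \<ge> 1\<close>, and \<open>x exp(\<lambda>x) \<ge> x + \<lambda>x\<^sup>2 + \<lambda>\<^sup>2x\<^sup>3/2\<close>
  together with \<open>|E X\<^sup>3| \<le> 3\<epsilon>\<sigma>\<^sup>2\<close> gives \<open>E[X exp(\<lambda>X)] \<ge> \<lambda>\<sigma>\<^sup>2(1 - 1.5\<lambda>\<epsilon>)\<close>. Finally
  \<open>\<sigma>\<^sup>2 \<le> 12\<epsilon>\<^sup>2\<close> turns the bound on the denominator into \<open>(1 - \<lambda>\<epsilon> + 6\<lambda>\<^sup>2\<epsilon>\<^sup>2)/(1 - \<lambda>\<epsilon>)\<close>.
\<close>

lemma sum_power_div_fact_le_exp: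
  fixes t :: real
  assumes "0 \<le> t"
  shows "(\<Sum>k<N. t ^ k / fact k) \<le> exp t"
proof -
  have sums: "(\<lambda>k. t ^ k / fact k) sums exp t"
    using exp_converges[of t] by (simp add: divide_inverse mult.commute)
  have "(\<Sum>k<N. t ^ k / fact k) \<le> (\<Sum>k. t ^ k / fact k)"
    using sums assms by (intro sum_le_suminf) (auto simp: sums_summable)
  then show ?thesis
    using sums_unique[OF sums] by simp
qed

lemma power_div_fact_le_exp:
  fixes t :: real
  assumes "0 \<le> t"
  shows "t ^ n / fact n \<le> exp t"
proof -
  have "t ^ n / fact n \<le> (\<Sum>k<Suc n. t ^ k / fact k)"
    using assms by (simp add: sum_nonneg)
  also have "\<dots> \<le> exp t"
    using assms by (rule sum_power_div_fact_le_exp)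
  finally show ?thesis .
qed

lemma exp_upper_Taylor_quadratic_nonpos:
  fixes t :: real
  assumes "t \<le> 0"
  shows "exp t \<le> 1 + t + t\<^sup>2 / 2"
proof -
  obtain s where "exp t = (\<Sum>m<3. t ^ m / fact m) + exp s / fact 3 * t ^ 3"
    using Maclaurin_exp_le[of t 3] by blast
  moreover have "exp s / fact 3 * t ^ 3 \<le> 0"
    using assms by (intro mult_nonneg_nonpos) (auto simp: power_odd_eq)
  ultimately show ?thesis
    by (simp add: numeral_3_eq_3 power2_eq_square)
qed

lemma le_mult_exp:
  fixes l x :: real
  assumes "0 \<le> l"
  shows "x \<le> x * exp (l * x)"
proof (cases "0 \<le> x")
  case True
  then show ?thesis
    using assms by (simp add: mult_le_cancel_left1)
next
  case False
  then show ?thesis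
    using assms by (simp add: mult_le_cancel_left2 mult_nonneg_nonpos)
qed

lemma cubic_Taylor_le_mult_exp:
  fixes l x :: real
  assumes "0 \<le> l"
  shows "x + l * x\<^sup>2 + l\<^sup>2 * x ^ 3 / 2 \<le> x * exp (l * x)"
proof -
  have "x + l * x\<^sup>2 + l\<^sup>2 * x ^ 3 / 2 = x * (1 + l * x + (l * x)\<^sup>2 / 2)"
    by (simp add: power2_eq_square power3_eq_cube algebra_simps)
  also have "\<dots> \<le> x * exp (l * x)"
  proof (cases "0 \<le> x")
    case True
    then show ?thesis
      using assms exp_lower_Taylor_quadratic[of "l * x"] by (intro mult_left_mono) auto
  next
    case False
    then show ?thesis
      using assms exp_upper_Taylor_quadratic_nonpos[of "l * x"]
      by (intro mult_left_mono_neg) (auto simp: mult_nonneg_nonpos)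
  qed
  finally show ?thesis .
qed

lemma Bernstein_denominator_pos:
  fixes x :: real
  shows "0 < 1 - x + 6 * x\<^sup>2"
proof -
  have "1 - x + 6 * x\<^sup>2 = 6 * (x - 1/12)\<^sup>2 + 23/24"
    by (simp add: power2_eq_square field_simps)
  moreover have "0 \<le> (x - 1/12)\<^sup>2"
    by simp
  ultimately show ?thesis
    by linarith
qed

lemma Bernstein_factor_ge_linear:
  fixes x :: real
  assumes "0 \<le> x"
  shows "1 - 2.4 * x \<le> (1 - 1.5 * x) * (1 - x) / (1 - x + 6 * x\<^sup>2)"
proof -
  have "(1 - 1.5 * x) * (1 - x) - (1 - 2.4 * x) * (1 - x + 6 * x\<^sup>2)
        = x * (14.4 * (x - 23/96)\<^sup>2 + 0.0734375)"
    by (simp add: power2_eq_square field_simps)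
  moreover have "0 \<le> x * (14.4 * (x - 23/96)\<^sup>2 + 0.0734375)"
    using assms by simp
  ultimately have "(1 - 2.4 * x) * (1 - x + 6 * x\<^sup>2) \<le> (1 - 1.5 * x) * (1 - x)"
    by linarith
  then show ?thesis
    using Bernstein_denominator_pos[of x] by (simp add: le_divide_eq)
qed

locale bernstein_moments = prob_space M for M :: "'a measure" +
  fixes X :: "'a \<Rightarrow> real" and \<epsilon> :: real
  assumes integrable_power: "\<And>k. integrable M (\<lambda>x. X x ^ k)"
    and eps_pos: "0 < \<epsilon>"
    and bernstein: "\<And>k. 3 \<le> k \<Longrightarrow>
        \<bar>\<integral>x. X x ^ k \<partial>M\<bar> \<le> 1/2 * fact k * \<epsilon> ^ (k - 2) * (\<integral>x. X x ^ 2 \<partial>M)"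
begin

definition moment :: "nat \<Rightarrow> real" where
  "moment k = (\<integral>x. X x ^ k \<partial>M)"

lemma borel_measurable_X [measurable]: "X \<in> borel_measurable M"
  using integrable_power[of 1] by (simp add: borel_measurable_integrable)

lemma moment_0 [simp]: "moment 0 = 1"
  by (simp add: moment_def prob_space)

lemma moment_2_nonneg: "0 \<le> moment 2"
  by (simp add: moment_def integral_nonneg_AE)

lemma abs_moment_le:
  assumes "2 \<le> k"
  shows "\<bar>moment k\<bar> \<le> fact k / 2 * \<epsilon> ^ (k - 2) * moment 2"
proof (cases "k = 2")
  case True
  then show ?thesis
    using moment_2_nonneg by simp
next
  case False
  then show ?thesis
    using bernstein[of k] assms by (simp add: moment_def)
qed

lemma moment_div_fact_le:
  assumes "0 \<le> c"
  shows "moment (m + 2) * c / fact (m + 2) \<le> moment 2 / 2 * \<epsilon> ^ m * c"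
proof -
  have "moment (m + 2) * c / fact (m + 2) \<le> \<bar>moment (m + 2)\<bar> * c / fact (m + 2)"
    using assms by (intro divide_right_mono mult_right_mono) auto
  also have "\<dots> \<le> fact (m + 2) / 2 * \<epsilon> ^ m * moment 2 * c / fact (m + 2)"
    using abs_moment_le[of "m + 2"] assms by (intro divide_right_mono mult_right_mono) auto
  also have "\<dots> = moment 2 / 2 * \<epsilon> ^ m * c"
    by simp
  finally show ?thesis .
qed

text \<open>\<open>(E X\<^sup>2)\<^sup>2 \<le> E X\<^sup>4 \<le> 12 \<epsilon>\<^sup>2 E X\<^sup>2\<close>.\<close>

lemma moment_2_le: "moment 2 \<le> 12 * \<epsilon>\<^sup>2"
proof -
  let ?s = "moment 2"
  have "0 \<le> (\<integral>x. (X x ^ 2 - ?s)\<^sup>2 \<partial>M)"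
    by (simp add: integral_nonneg_AE)
  also have "(\<integral>x. (X x ^ 2 - ?s)\<^sup>2 \<partial>M) = (\<integral>x. X x ^ 4 - 2 * ?s * X x ^ 2 + ?s\<^sup>2 \<partial>M)"
    by (rule Bochner_Integration.integral_cong)
      (simp_all add: power2_eq_square power4_eq_xxxx algebra_simps)
  also have "\<dots> = moment 4 - ?s\<^sup>2"
    using integrable_power
    by (simp add: moment_def integral_add integral_diff prob_space, simp add: power2_eq_square)
  finally have "?s * ?s \<le> moment 4"
    by (simp add: power2_eq_square)
  also have "\<dots> \<le> 12 * \<epsilon>\<^sup>2 * ?s"
    using abs_moment_le[of 4] by (simp add: fact_numeral)
  finally show ?thesis
    using moment_2_nonneg by (cases "?s = 0") (auto simp: mult_le_cancel_right)
qed

text \<open>Bernstein's condition bounds signed moments only, so it cannot be applied to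
  \<open>E exp (l \<bar>X\<bar>)\<close> directly; instead \<open>exp (l X) + exp (- l X)\<close> is expanded, whose series has only
  even, hence nonnegative, terms.\<close>

lemma integrable_exp_abs:
  assumes l: "0 \<le> l" "l * \<epsilon> < 1"
  shows "integrable M (\<lambda>x. exp (l * \<bar>X x\<bar>))"
proof -
  define t where "t k = (l ^ k + (- l) ^ k) / fact k" for k
  define f where "f N x = (\<Sum>k<N. t k * X x ^ k)" for N x
  define u where "u x = exp (l * X x) + exp (- l * X x)" for x
  have t_nonneg: "0 \<le> t k * X x ^ k" for k x
    by (cases "even k") (simp_all add: t_def zero_le_even_power)
  have sums_u: "(\<lambda>k. t k * X x ^ k) sums u x" for x
  proof -
    have "(\<lambda>k. (l * X x) ^ k /\<^sub>R fact k + (- l * X x) ^ k /\<^sub>R fact k) sums u x"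
      unfolding u_def by (intro sums_add exp_converges)
    then show ?thesis
      by (simp only: power_mult_distrib) (simp add: t_def divide_inverse algebra_simps)
  qed
  have integral_f: "integral\<^sup>L M (f N) = (\<Sum>k<N. t k * moment k)" for N
    unfolding f_def moment_def using integrable_power by (simp add: integral_sum)
  have summable: "summable (\<lambda>k. t k * moment k)"
  proof (rule summable_comparison_test')
    show "summable (\<lambda>k. moment 2 / \<epsilon>\<^sup>2 * (l * \<epsilon>) ^ k)"
      using l eps_pos by (intro summable_mult summable_geometric) auto
    fix k :: nat
    assume k: "2 \<le> k"
    have "norm (t k * moment k) \<le> 2 * l ^ k / fact k * \<bar>moment k\<bar>"
      unfolding t_def
      by (auto simp: abs_mult power_abs abs_minus_cancel l
          intro!: mult_right_mono divide_right_mono order.trans[OF abs_triangle_ineq])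
    also have "\<dots> \<le> 2 * l ^ k / fact k * (fact k / 2 * \<epsilon> ^ (k - 2) * moment 2)"
      using abs_moment_le[OF k] l by (intro mult_left_mono) auto
    also have "\<dots> = moment 2 / \<epsilon>\<^sup>2 * (l * \<epsilon>) ^ k"
    proof -
      have "\<epsilon> ^ k = \<epsilon> ^ (k - 2) * \<epsilon>\<^sup>2"
        using k eps_pos by (simp add: power_diff)
      then show ?thesis
        using eps_pos by (simp add: power_mult_distrib field_simps)
    qed
    finally show "norm (t k * moment k) \<le> moment 2 / \<epsilon>\<^sup>2 * (l * \<epsilon>) ^ k" .
  qed
  have f_mono: "mono (\<lambda>N. f N x)" for x
  proof (rule incseq_SucI)
    fix N
    show "f N x \<le> f (Suc N) x"
      using t_nonneg[of N x] by (simp add: f_def)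
  qed
  have u_integrable: "integrable M u"
  proof (rule integrable_monotone_convergence[where f = f and x = "\<Sum>k. t k * moment k"])
    show "integrable M (f N)" for N
      unfolding f_def using integrable_power by auto
    show "AE x in M. mono (\<lambda>N. f N x)"
      using f_mono by simp
    show "AE x in M. (\<lambda>N. f N x) \<longlonglongrightarrow> u x"
      using sums_u by (simp add: f_def sums_def)
    show "(\<lambda>N. integral\<^sup>L M (f N)) \<longlonglongrightarrow> (\<Sum>k. t k * moment k)"
      using summable_LIMSEQ[OF summable] by (simp add: integral_f)
    show "u \<in> borel_measurable M"
      unfolding u_def[abs_def] by measurable
  qed
  have "exp (l * \<bar>X x\<bar>) \<le> u x" for x
    by (cases "0 \<le> X x") (simp_all add: u_def add_increasing add_increasing2)
  then have "AE x in M. norm (exp (l * \<bar>X x\<bar>)) \<le> norm (u x)"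
    by (intro AE_I2) (simp add: order_trans[OF _ abs_ge_self])
  moreover have "(\<lambda>x. exp (l * \<bar>X x\<bar>)) \<in> borel_measurable M"
    by measurable
  ultimately show ?thesis
    by (rule Bochner_Integration.integrable_bound[OF u_integrable, rotated])
qed

text \<open>The polynomial factor is absorbed by raising the exponent from \<open>l\<close> to some \<open>l' < 1/\<epsilon>\<close>.\<close>

lemma power_exp_dominated:
  assumes l: "0 \<le> l" "l * \<epsilon> < 1"
  obtains w where "integrable M w" "\<And>x. \<bar>X x\<bar> ^ j * exp (l * \<bar>X x\<bar>) \<le> w x"
proof -
  define l' where "l' = (l + 1 / \<epsilon>) / 2"
  define \<delta> where "\<delta> = l' - l"
  have \<delta>: "0 < \<delta>" and l': "0 \<le> l'" "l' * \<epsilon> < 1"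
    using l eps_pos by (auto simp: \<delta>_def l'_def field_simps)
  define w where "w x = fact j / \<delta> ^ j * exp (l' * \<bar>X x\<bar>)" for x
  show ?thesis
  proof
    show "integrable M w"
      unfolding w_def using integrable_exp_abs[OF l'] by simp
    fix x
    have "(\<delta> * \<bar>X x\<bar>) ^ j / fact j \<le> exp (\<delta> * \<bar>X x\<bar>)"
      using \<delta> by (intro power_div_fact_le_exp) simp
    then have "\<bar>X x\<bar> ^ j \<le> fact j / \<delta> ^ j * exp (\<delta> * \<bar>X x\<bar>)"
      using \<delta> by (simp add: power_mult_distrib field_simps)
    then have "\<bar>X x\<bar> ^ j * exp (l * \<bar>X x\<bar>)
        \<le> fact j / \<delta> ^ j * (exp (\<delta> * \<bar>X x\<bar>) * exp (l * \<bar>X x\<bar>))"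
      by (subst mult.assoc[symmetric]) (rule mult_right_mono, simp_all)
    also have "exp (\<delta> * \<bar>X x\<bar>) * exp (l * \<bar>X x\<bar>) = exp (l' * \<bar>X x\<bar>)"
      by (simp add: \<delta>_def left_diff_distrib flip: exp_add)
    finally show "\<bar>X x\<bar> ^ j * exp (l * \<bar>X x\<bar>) \<le> w x"
      by (simp add: w_def)
  qed
qed

lemma integrable_power_exp:
  assumes "0 \<le> l" "l * \<epsilon> < 1"
  shows "integrable M (\<lambda>x. X x ^ j * exp (l * X x))"
proof -
  obtain w where w: "integrable M w" "\<And>x. \<bar>X x\<bar> ^ j * exp (l * \<bar>X x\<bar>) \<le> w x"
    using power_exp_dominated[OF assms, where j = j] by blast
  have "norm (X x ^ j * exp (l * X x)) \<le> norm (w x)" for x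
  proof -
    have "norm (X x ^ j * exp (l * X x)) \<le> \<bar>X x\<bar> ^ j * exp (l * \<bar>X x\<bar>)"
      using assms by (simp add: abs_mult power_abs mult_left_mono)
    also have "\<dots> \<le> norm (w x)"
      using w(2)[of x] by simp
    finally show ?thesis .
  qed
  then show ?thesis
    by (intro Bochner_Integration.integrable_bound[OF w(1)]) auto
qed

lemma sums_moment_exp:
  assumes l: "0 \<le> l" "l * \<epsilon> < 1"
  shows "(\<lambda>k. moment (k + j) * l ^ k / fact k) sums (\<integral>x. X x ^ j * exp (l * X x) \<partial>M)"
proof -
  obtain w where w: "integrable M w" "\<And>x. \<bar>X x\<bar> ^ j * exp (l * \<bar>X x\<bar>) \<le> w x"
    using power_exp_dominated[OF l, where j = j] by blast
  define s where "s N x = (\<Sum>k<N. X x ^ (k + j) * l ^ k / fact k)" for N x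
  have "(\<lambda>N. integral\<^sup>L M (s N)) \<longlonglongrightarrow> (\<integral>x. X x ^ j * exp (l * X x) \<partial>M)"
  proof (rule integral_dominated_convergence[where w = w])
    show "(\<lambda>x. X x ^ j * exp (l * X x)) \<in> borel_measurable M"
      by measurable
    show "s N \<in> borel_measurable M" for N
      unfolding s_def[abs_def] by measurable
    show "integrable M w"
      by (rule w(1))
    have "(\<lambda>N. s N x) \<longlonglongrightarrow> X x ^ j * exp (l * X x)" for x
    proof -
      have "(\<lambda>k. X x ^ j * ((l * X x) ^ k /\<^sub>R fact k)) sums (X x ^ j * exp (l * X x))"
        by (intro sums_mult exp_converges)
      moreover have "(\<lambda>k. X x ^ j * ((l * X x) ^ k /\<^sub>R fact k))
          = (\<lambda>k. X x ^ (k + j) * l ^ k / fact k)"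
        by (simp add: power_mult_distrib power_add divide_inverse algebra_simps)
      ultimately have "(\<lambda>k. X x ^ (k + j) * l ^ k / fact k) sums (X x ^ j * exp (l * X x))"
        by (simp only:)
      then show ?thesis
        unfolding s_def sums_def .
    qed
    then show "AE x in M. (\<lambda>N. s N x) \<longlonglongrightarrow> X x ^ j * exp (l * X x)"
      by simp
    have "norm (s N x) \<le> w x" for N x
    proof -
      have "norm (s N x) \<le> (\<Sum>k<N. \<bar>X x ^ (k + j) * l ^ k / fact k\<bar>)"
        unfolding s_def real_norm_def by (rule sum_abs)
      also have "\<dots> = \<bar>X x\<bar> ^ j * (\<Sum>k<N. (l * \<bar>X x\<bar>) ^ k / fact k)"
        using l by (simp add: sum_distrib_left abs_mult power_abs power_add
            power_mult_distrib algebra_simps)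
      also have "\<dots> \<le> \<bar>X x\<bar> ^ j * exp (l * \<bar>X x\<bar>)"
        using l by (intro mult_left_mono sum_power_div_fact_le_exp) auto
      also have "\<dots> \<le> w x"
        by (rule w(2))
      finally show ?thesis .
    qed
    then show "AE x in M. norm (s N x) \<le> w x" for N
      by simp
  qed
  moreover have "integral\<^sup>L M (s N) = (\<Sum>k<N. moment (k + j) * l ^ k / fact k)" for N
    unfolding s_def moment_def using integrable_power by (simp add: integral_sum)
  ultimately show ?thesis
    by (simp add: sums_def)
qed

end

locale centered_bernstein = bernstein_moments +
  assumes mean_zero: "(\<integral>x. X x \<partial>M) = 0"
begin

lemma moment_1 [simp]: "moment 1 = 0" "moment (Suc 0) = 0"
  using mean_zero by (simp_all add: moment_def)

context
  fixes l :: real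
  assumes l: "0 \<le> l" "l * \<epsilon> < 1"
begin

lemma one_le_mgf: "1 \<le> (\<integral>x. exp (l * X x) \<partial>M)"
proof -
  have "(\<integral>x. 1 + l * X x \<partial>M) \<le> (\<integral>x. exp (l * X x) \<partial>M)"
    using integrable_power_exp[OF l, of 0] integrable_power[of 1]
    by (intro integral_mono) auto
  moreover have "(\<integral>x. 1 + l * X x \<partial>M) = 1"
    using integrable_power[of 1] mean_zero by (simp add: prob_space)
  ultimately show ?thesis
    by simp
qed

lemma mgf_le: "(\<integral>x. exp (l * X x) \<partial>M) \<le> 1 + l\<^sup>2 * moment 2 / 2 / (1 - l * \<epsilon>)"
proof -
  let ?F = "\<integral>x. exp (l * X x) \<partial>M"
  let ?f = "\<lambda>k. moment k * l ^ k / fact k"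
  have "?f sums ?F"
    using sums_moment_exp[OF l, of 0] by simp
  moreover have "(\<Sum>k<2. ?f k) = 1"
    by (simp add: eval_nat_numeral)
  ultimately have tail: "(\<lambda>k. ?f (k + 2)) sums (?F - 1)"
    using sums_iff_shift[of ?f 2 "?F - 1"] by simp
  have "(\<lambda>k. (l * \<epsilon>) ^ k) sums (1 / (1 - l * \<epsilon>))"
    using l eps_pos by (intro geometric_sums) simp
  from sums_mult[OF this, of "l\<^sup>2 * moment 2 / 2"]
  have geom: "(\<lambda>k. l\<^sup>2 * moment 2 / 2 * (l * \<epsilon>) ^ k) sums (l\<^sup>2 * moment 2 / 2 / (1 - l * \<epsilon>))"
    by simp
  have "?f (k + 2) \<le> l\<^sup>2 * moment 2 / 2 * (l * \<epsilon>) ^ k" for k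
    using moment_div_fact_le[of "l ^ (k + 2)" k] l
    by (simp add: power_mult_distrib power_add power2_eq_square mult_ac)
  then have "?F - 1 \<le> l\<^sup>2 * moment 2 / 2 / (1 - l * \<epsilon>)"
    by (rule sums_le[OF _ tail geom])
  then show ?thesis
    by simp
qed

lemma tilted_numerator_nonneg: "0 \<le> (\<integral>x. X x * exp (l * X x) \<partial>M)"
proof -
  have "(\<integral>x. X x \<partial>M) \<le> (\<integral>x. X x * exp (l * X x) \<partial>M)"
    using integrable_power_exp[OF l, of 1] integrable_power[of 1]
    by (intro integral_mono) (auto simp: le_mult_exp l)
  then show ?thesis
    using mean_zero by simp
qed

lemma tilted_numerator_ge:
  "l * moment 2 * (1 - 1.5 * (l * \<epsilon>)) \<le> (\<integral>x. X x * exp (l * X x) \<partial>M)"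
proof -
  have int: "integrable M X" "integrable M (\<lambda>x. l * X x ^ 2)"
    "integrable M (\<lambda>x. l\<^sup>2 * X x ^ 3 / 2)"
    using integrable_power[of 1] integrable_power[of 2] integrable_power[of 3] by simp_all
  have "- (3 * \<epsilon> * moment 2) \<le> moment 3"
    using abs_moment_le[of 3] by (simp add: fact_numeral)
  then have "l\<^sup>2 * (- (3 * \<epsilon> * moment 2)) \<le> l\<^sup>2 * moment 3"
    by (rule mult_left_mono) simp
  then have "l * moment 2 * (1 - 1.5 * (l * \<epsilon>)) \<le> moment 1 + l * moment 2 + l\<^sup>2 * moment 3 / 2"
    by (simp add: power2_eq_square algebra_simps)
  also have "\<dots> = (\<integral>x. X x + l * X x ^ 2 + l\<^sup>2 * X x ^ 3 / 2 \<partial>M)"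
    using int by (simp add: moment_def)
  also have "\<dots> \<le> (\<integral>x. X x * exp (l * X x) \<partial>M)"
  proof (rule integral_mono)
    show "integrable M (\<lambda>x. X x + l * X x ^ 2 + l\<^sup>2 * X x ^ 3 / 2)"
      using int by (intro Bochner_Integration.integrable_add)
    show "integrable M (\<lambda>x. X x * exp (l * X x))"
      using integrable_power_exp[OF l, of 1] by simp
    show "X x + l * X x ^ 2 + l\<^sup>2 * X x ^ 3 / 2 \<le> X x * exp (l * X x)" for x
      using cubic_Taylor_le_mult_exp[OF l(1)] by simp
  qed
  finally show ?thesis .
qed

lemma tilted_numerator_le:
  "(\<integral>x. X x * exp (l * X x) \<partial>M) \<le> l * moment 2 / 2 * (1 / (1 - l * \<epsilon>)\<^sup>2 + 1 / (1 - l * \<epsilon>))"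
proof -
  let ?G = "\<integral>x. X x * exp (l * X x) \<partial>M"
  let ?g = "\<lambda>k. moment (k + 1) * l ^ k / fact k"
  have "?g sums ?G"
    using sums_moment_exp[OF l, of 1] by simp
  then have tail: "(\<lambda>k. ?g (k + 1)) sums ?G"
    using sums_iff_shift[of ?g 1 ?G] by simp
  have "(\<lambda>k. of_nat (Suc k) * (l * \<epsilon>) ^ k + (l * \<epsilon>) ^ k)
      sums (1 / (1 - l * \<epsilon>)\<^sup>2 + 1 / (1 - l * \<epsilon>))"
    using l eps_pos by (intro sums_add geometric_deriv_sums geometric_sums) auto
  from sums_mult[OF this, of "l * moment 2 / 2"]
  have series: "(\<lambda>k. l * moment 2 / 2 * (of_nat (Suc k) * (l * \<epsilon>) ^ k + (l * \<epsilon>) ^ k))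
      sums (l * moment 2 / 2 * (1 / (1 - l * \<epsilon>)\<^sup>2 + 1 / (1 - l * \<epsilon>)))" .
  have "?g (k + 1) \<le> l * moment 2 / 2 * (of_nat (Suc k) * (l * \<epsilon>) ^ k + (l * \<epsilon>) ^ k)" for k
  proof -
    have fact_eq: "(fact (k + 2) :: real) = (real k + 2) * fact (k + 1)"
      by (simp add: algebra_simps)
    have "?g (k + 1) = moment (k + 2) * l ^ (k + 1) / fact (k + 1)"
      by (simp add: add.assoc)
    also have "\<dots> = moment (k + 2) * ((real k + 2) * l ^ (k + 1)) / fact (k + 2)"
      unfolding fact_eq by (simp add: mult.left_commute)
    also have "\<dots> \<le> moment 2 / 2 * \<epsilon> ^ k * ((real k + 2) * l ^ (k + 1))"
      using l by (intro moment_div_fact_le) simp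
    also have "\<dots> = l * moment 2 / 2 * (of_nat (Suc k) * (l * \<epsilon>) ^ k + (l * \<epsilon>) ^ k)"
      by (simp add: power_mult_distrib algebra_simps)
    finally show ?thesis .
  qed
  then show ?thesis
    by (rule sums_le[OF _ tail series])
qed

lemma tilted_mean_le:
  "(\<integral>x. X x * exp (l * X x) \<partial>M) / (\<integral>x. exp (l * X x) \<partial>M)
     \<le> (1 - 0.5 * l * \<epsilon>) / (1 - l * \<epsilon>)\<^sup>2 * l * moment 2"
proof -
  have "(\<integral>x. X x * exp (l * X x) \<partial>M) / (\<integral>x. exp (l * X x) \<partial>M)
      \<le> (\<integral>x. X x * exp (l * X x) \<partial>M)"
    using one_le_mgf tilted_numerator_nonneg by (simp add: divide_le_eq mult_le_cancel_left1)
  also have "\<dots> \<le> l * moment 2 / 2 * (1 / (1 - l * \<epsilon>)\<^sup>2 + 1 / (1 - l * \<epsilon>))"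
    by (rule tilted_numerator_le)
  also have "\<dots> = (1 - 0.5 * l * \<epsilon>) / (1 - l * \<epsilon>)\<^sup>2 * l * moment 2"
  proof -
    define q where "q = 1 - l * \<epsilon>"
    have "q \<noteq> 0" and half: "1 - 0.5 * l * \<epsilon> = (1 + q) / 2"
      using l by (simp_all add: q_def)
    then show ?thesis
      by (simp only: half q_def[symmetric]) (simp add: field_simps power2_eq_square)
  qed
  finally show ?thesis .
qed

lemma tilted_mean_ge:
  "(1 - 1.5 * l * \<epsilon>) * (1 - l * \<epsilon>) / (1 - l * \<epsilon> + 6 * l\<^sup>2 * \<epsilon>\<^sup>2) * l * moment 2
     \<le> (\<integral>x. X x * exp (l * X x) \<partial>M) / (\<integral>x. exp (l * X x) \<partial>M)"
proof -
  let ?F = "\<integral>x. exp (l * X x) \<partial>M"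
  let ?G = "\<integral>x. X x * exp (l * X x) \<partial>M"
  let ?x = "l * \<epsilon>"
  let ?D = "1 - ?x + 6 * ?x\<^sup>2"
  have F_pos: "0 < ?F"
    using one_le_mgf by simp
  have "?F \<le> 1 + l\<^sup>2 * moment 2 / 2 / (1 - ?x)"
    by (rule mgf_le)
  also have "\<dots> \<le> 1 + l\<^sup>2 * (12 * \<epsilon>\<^sup>2) / 2 / (1 - ?x)"
    using moment_2_le l by (intro add_left_mono divide_right_mono mult_left_mono) auto
  also have "\<dots> = ?D / (1 - ?x)"
    using l by (simp add: field_simps power_mult_distrib)
  finally have F_le: "?F \<le> ?D / (1 - ?x)" .
  have "(1 - 1.5 * l * \<epsilon>) * (1 - l * \<epsilon>) / (1 - l * \<epsilon> + 6 * l\<^sup>2 * \<epsilon>\<^sup>2) * l * moment 2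
      = (1 - 1.5 * ?x) * (1 - ?x) / ?D * (l * moment 2)"
    by (simp add: power_mult_distrib mult.assoc)
  also have "\<dots> \<le> ?G / ?F"
  proof (cases "1 - 1.5 * ?x \<le> 0")
    case True
    have "(1 - 1.5 * ?x) * (1 - ?x) / ?D \<le> 0"
      using True l Bernstein_denominator_pos[of ?x]
      by (intro divide_nonpos_pos mult_nonpos_nonneg) simp_all
    then have "(1 - 1.5 * ?x) * (1 - ?x) / ?D * (l * moment 2) \<le> 0"
      using l moment_2_nonneg by (intro mult_nonpos_nonneg) simp_all
    also have "0 \<le> ?G / ?F"
      using tilted_numerator_nonneg F_pos by simp
    finally show ?thesis .
  next
    case False
    have "(1 - 1.5 * ?x) * (1 - ?x) / ?D * (l * moment 2)
        = l * moment 2 * (1 - 1.5 * ?x) / (?D / (1 - ?x))"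
      by (simp add: divide_divide_eq_right mult_ac)
    also have "\<dots> \<le> l * moment 2 * (1 - 1.5 * ?x) / ?F"
    proof (rule divide_left_mono[OF F_le])
      show "0 \<le> l * moment 2 * (1 - 1.5 * ?x)"
        using False l moment_2_nonneg by simp
      show "0 < ?D / (1 - ?x) * ?F"
        using Bernstein_denominator_pos[of ?x] l F_pos by simp
    qed
    also have "\<dots> \<le> ?G / ?F"
      using tilted_numerator_ge F_pos by (intro divide_right_mono) auto
    finally show ?thesis .
  qed
  finally show ?thesis .
qed

end

end

theorem lemma1:
  fixes M :: "'a measure" and \<xi> :: "nat \<Rightarrow> 'a \<Rightarrow> real" and n :: nat
    and \<epsilon> \<sigma>2 l :: real
  assumes "prob_space M"
    and indep: "prob_space.indep_vars M (\<lambda>_. borel) \<xi> {1..n}"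
    and integ: "\<And>i k. i \<in> {1..n} \<Longrightarrow> integrable M (\<lambda>x. \<xi> i x ^ k)"
    and mean0: "\<And>i. i \<in> {1..n} \<Longrightarrow> (\<integral>x. \<xi> i x \<partial>M) = 0"
    and eps: "\<epsilon> > 0"
    and bernstein: "\<And>i k. i \<in> {1..n} \<Longrightarrow> k \<ge> 3 \<Longrightarrow>
        \<bar>\<integral>x. \<xi> i x ^ k \<partial>M\<bar> \<le> 1/2 * fact k * \<epsilon> ^ (k - 2) * (\<integral>x. \<xi> i x ^ 2 \<partial>M)"
    and sigma: "\<sigma>2 = (\<Sum>i=1..n. \<integral>x. \<xi> i x ^ 2 \<partial>M)"
    and lam: "0 \<le> l" "l < 1 / \<epsilon>"
  shows "(1 - 2.4 * l * \<epsilon>) * l * \<sigma>2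
           \<le> (1 - 1.5 * l * \<epsilon>) * (1 - l * \<epsilon>) / (1 - l * \<epsilon> + 6 * l^2 * \<epsilon>^2) * l * \<sigma>2
       \<and> (1 - 1.5 * l * \<epsilon>) * (1 - l * \<epsilon>) / (1 - l * \<epsilon> + 6 * l^2 * \<epsilon>^2) * l * \<sigma>2
           \<le> T_n M \<xi> n l
       \<and> T_n M \<xi> n l \<le> (1 - 0.5 * l * \<epsilon>) / (1 - l * \<epsilon>)^2 * l * \<sigma>2"
proof -
  let ?R = "(1 - 1.5 * l * \<epsilon>) * (1 - l * \<epsilon>) / (1 - l * \<epsilon> + 6 * l^2 * \<epsilon>^2)"
  let ?U = "(1 - 0.5 * l * \<epsilon>) / (1 - l * \<epsilon>)^2"
  let ?s = "\<lambda>i. \<integral>x. \<xi> i x ^ 2 \<partial>M"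
  let ?t = "\<lambda>i. (\<integral>x. \<xi> i x * exp (l * \<xi> i x) \<partial>M) / (\<integral>x. exp (l * \<xi> i x) \<partial>M)"
  have l_eps: "l * \<epsilon> < 1"
    using eps lam by (simp add: field_simps)
  have bounds: "?R * l * ?s i \<le> ?t i \<and> ?t i \<le> ?U * l * ?s i" if i: "i \<in> {1..n}" for i
  proof -
    interpret centered_bernstein M "\<xi> i" \<epsilon>
      using assms(1) integ[OF i] mean0[OF i] eps bernstein[OF i]
      by (simp add: centered_bernstein_def bernstein_moments_def
          bernstein_moments_axioms_def centered_bernstein_axioms_def)
    show ?thesis
      using tilted_mean_ge[OF lam(1) l_eps] tilted_mean_le[OF lam(1) l_eps]
      by (simp add: moment_def)
  qed
  have T_n_eq: "T_n M \<xi> n l = (\<Sum>i=1..n. ?t i)"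
    by (simp add: T_n_def)
  have "?R * l * \<sigma>2 = (\<Sum>i=1..n. ?R * l * ?s i)"
    by (simp add: sigma sum_distrib_left)
  also have "\<dots> \<le> T_n M \<xi> n l"
    unfolding T_n_eq using bounds by (intro sum_mono) blast
  finally have lower: "?R * l * \<sigma>2 \<le> T_n M \<xi> n l" .
  have "T_n M \<xi> n l \<le> (\<Sum>i=1..n. ?U * l * ?s i)"
    unfolding T_n_eq using bounds by (intro sum_mono) blast
  also have "\<dots> = ?U * l * \<sigma>2"
    by (simp add: sigma sum_distrib_left)
  finally have upper: "T_n M \<xi> n l \<le> ?U * l * \<sigma>2" .
  have "0 \<le> \<sigma>2"
    unfolding sigma by (intro sum_nonneg integral_nonneg_AE) simp
  moreover have "1 - 2.4 * l * \<epsilon> \<le> ?R"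
    using Bernstein_factor_ge_linear[of "l * \<epsilon>"] lam eps
    by (simp add: mult.assoc power_mult_distrib)
  ultimately have "(1 - 2.4 * l * \<epsilon>) * (l * \<sigma>2) \<le> ?R * (l * \<sigma>2)"
    using lam by (intro mult_right_mono) simp_all
  then show ?thesis
    using lower upper by (simp add: mult.assoc)
qed

end
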